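(* Consider counterexamples of the following form: $G$ is a planar graph containing no $3$-cycle, $4$-cycle and $5$-cycle that are pairwise adjacent, $C_0$ is a $3$-cycle of $G$, $s\ge1$, $H$ is a cover of $G$ with respect to $L(v)=\{1,\dots,s\}$ for all $v$, $F=(f_1,\dots,f_s)$ with $f_i(v)\in\{0,1,2\}$ and $f_1(v)+\cdots+f_s(v)\ge4$ for all $v$, and $R_0$ is a DP-$F$-coloring of $C_0$ (with respect to the restriction of $H$ to the vertices over $V(C_0)$) that cannot be extended to a DP-$F$-coloring of $(G,H)$. If such a counterexample has $|V(G)|$ minimum, then every vertex of $G$ not on $C_0$ has degree at least $4$.
   Context: Two cycles are adjacent if they share an edge. A cover $H$ of $G$ w.r.t. $L$ has vertex set $\{(u,c):c\in L(u)\}$, each $\{u\}\times L(u)$ is a clique, for each edge $uv$ the edges between $\{u\}\times L(u)$ and $\{v\}\times L(v)$ form a matching, and there are no such edges for non-adjacent $u,v$. A representative set contains exactly one vertex of each $\{v\}\times L(v)$. A DP-$F$-coloring is a representative set $R$ admitting an ordering in which each $(v,i)\in R$ has fewer than $f_i(v)$ $H$-neighbors among earlier elements of $R$; extending $R_0$ means finding a DP-$F$-coloring of $(G,H)$ containing $R_0$. *)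

theory Defs
  imports "HOL-Analysis.Analysis"
begin

definition simple_graph :: "'a set \<Rightarrow> ('a \<Rightarrow> 'a \<Rightarrow> bool) \<Rightarrow> bool" where
  "simple_graph V E \<longleftrightarrow> finite V \<and> (\<forall>u v. E u v \<longrightarrow> u \<in> V \<and> v \<in> V \<and> u \<noteq> v \<and> E v u)"

definition degree :: "'a set \<Rightarrow> ('a \<Rightarrow> 'a \<Rightarrow> bool) \<Rightarrow> 'a \<Rightarrow> nat" where
  "degree V E v = card {u \<in> V. E v u}"

definition planar :: "'a set \<Rightarrow> ('a \<Rightarrow> 'a \<Rightarrow> bool) \<Rightarrow> bool" where
  "planar V E \<longleftrightarrow> (\<exists>(p :: 'a \<Rightarrow> complex) (\<gamma> :: 'a set \<Rightarrow> real \<Rightarrow> complex).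
     inj_on p V \<and>
     (\<forall>u v. E u v \<longrightarrow> arc (\<gamma> {u, v}) \<and> {pathstart (\<gamma> {u,v}), pathfinish (\<gamma> {u,v})} = {p u, p v}
         \<and> path_image (\<gamma> {u, v}) \<inter> p ` V = {p u, p v}) \<and>
     (\<forall>u v x y. E u v \<longrightarrow> E x y \<longrightarrow> {u, v} \<noteq> {x, y} \<longrightarrow>
         path_image (\<gamma> {u, v}) \<inter> path_image (\<gamma> {x, y}) \<subseteq> p ` ({u, v} \<inter> {x, y})))"

definition is_cycle :: "('a \<Rightarrow> 'a \<Rightarrow> bool) \<Rightarrow> nat \<Rightarrow> 'a list \<Rightarrow> bool" where
  "is_cycle E k xs \<longleftrightarrow> k \<ge> 3 \<and> length xs = k \<and> distinct xs \<and>
     (\<forall>i < k. E (xs ! i) (xs ! ((i + 1) mod k)))"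

definition cycle_edges :: "'a list \<Rightarrow> 'a set set" where
  "cycle_edges xs = {{xs ! i, xs ! ((i + 1) mod length xs)} | i. i < length xs}"

definition adjacent_cycles :: "'a list \<Rightarrow> 'a list \<Rightarrow> bool" where
  "adjacent_cycles xs ys \<longleftrightarrow> cycle_edges xs \<inter> cycle_edges ys \<noteq> {}"

definition no_adjacent_345 :: "('a \<Rightarrow> 'a \<Rightarrow> bool) \<Rightarrow> bool" where
  "no_adjacent_345 E \<longleftrightarrow> \<not> (\<exists>c3 c4 c5. is_cycle E 3 c3 \<and> is_cycle E 4 c4 \<and> is_cycle E 5 c5 \<and>
       adjacent_cycles c3 c4 \<and> adjacent_cycles c3 c5 \<and> adjacent_cycles c4 c5)"

definition is_cover :: "'a set \<Rightarrow> ('a \<Rightarrow> 'a \<Rightarrow> bool) \<Rightarrow> nat \<Rightarrow>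
    ('a \<times> nat \<Rightarrow> 'a \<times> nat \<Rightarrow> bool) \<Rightarrow> bool" where
  "is_cover V E s HE \<longleftrightarrow>
     (\<forall>x y. HE x y \<longrightarrow> x \<in> V \<times> {1..s} \<and> y \<in> V \<times> {1..s} \<and> x \<noteq> y \<and> HE y x) \<and>
     (\<forall>u \<in> V. \<forall>c \<in> {1..s}. \<forall>d \<in> {1..s}. c \<noteq> d \<longrightarrow> HE (u, c) (u, d)) \<and>
     (\<forall>u v c d d'. u \<noteq> v \<longrightarrow> HE (u, c) (v, d) \<longrightarrow> HE (u, c) (v, d') \<longrightarrow> d = d') \<and>
     (\<forall>u v c d. u \<noteq> v \<longrightarrow> HE (u, c) (v, d) \<longrightarrow> E u v)"

definition representative :: "'a set \<Rightarrow> nat \<Rightarrow> ('a \<times> nat) set \<Rightarrow> bool" where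
  "representative W s R \<longleftrightarrow> R \<subseteq> W \<times> {1..s} \<and> (\<forall>v \<in> W. \<exists>!c. (v, c) \<in> R)"

text \<open>DP-F-coloring (over the vertices W, w.r.t. the cover edges HE; F given by f i v = f_i(v)).\<close>
definition dp_F_coloring :: "('a \<times> nat \<Rightarrow> 'a \<times> nat \<Rightarrow> bool) \<Rightarrow> nat \<Rightarrow> (nat \<Rightarrow> 'a \<Rightarrow> nat) \<Rightarrow>
    'a set \<Rightarrow> ('a \<times> nat) set \<Rightarrow> bool" where
  "dp_F_coloring HE s f W R \<longleftrightarrow> representative W s R \<and>
     (\<exists>xs. distinct xs \<and> set xs = R \<and>
        (\<forall>j < length xs. card {k. k < j \<and> HE (xs ! k) (xs ! j)} < f (snd (xs ! j)) (fst (xs ! j))))"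

definition restrict_cover :: "('a \<times> nat \<Rightarrow> 'a \<times> nat \<Rightarrow> bool) \<Rightarrow> 'a set \<Rightarrow>
    ('a \<times> nat \<Rightarrow> 'a \<times> nat \<Rightarrow> bool)" where
  "restrict_cover HE W = (\<lambda>x y. HE x y \<and> fst x \<in> W \<and> fst y \<in> W)"

definition counterexample :: "'a set \<Rightarrow> ('a \<Rightarrow> 'a \<Rightarrow> bool) \<Rightarrow> 'a list \<Rightarrow> nat \<Rightarrow>
    ('a \<times> nat \<Rightarrow> 'a \<times> nat \<Rightarrow> bool) \<Rightarrow> (nat \<Rightarrow> 'a \<Rightarrow> nat) \<Rightarrow> ('a \<times> nat) set \<Rightarrow> bool" where
  "counterexample V E C0 s HE f R0 \<longleftrightarrow>
     simple_graph V E \<and> planar V E \<and> no_adjacent_345 E \<and>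
     is_cycle E 3 C0 \<and> s \<ge> 1 \<and> is_cover V E s HE \<and>
     (\<forall>v \<in> V. (\<forall>i \<in> {1..s}. f i v \<in> {0, 1, 2}) \<and> (\<Sum>i = 1..s. f i v) \<ge> 4) \<and>
     dp_F_coloring (restrict_cover HE (set C0)) s f (set C0) R0 \<and>
     \<not> (\<exists>R. dp_F_coloring HE s f V R \<and> R0 \<subseteq> R)"

end

theory Submission
  imports Defs
begin

text \<open>Suppose a vertex v outside C0 had degree at most 3. All hypotheses on a counterexample
  pass to induced subgraphs, so G - v with the restricted cover is again a counterexample
  unless R0 extends to a DP-F-coloring R of G - v. But then R extends to G: since H is a
  matching between fibers and R has one vertex per fibre, the sets of colored H-neighbors of
  (v,1), ..., (v,s) are disjoint and together have at most deg v \<le> 3 < f_1(v) + ... + f_s(v)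
  elements, so some (v,c) has fewer than f_c(v) of them and can be colored last. Hence G - v is
  a counterexample with fewer vertices, contradicting minimality.\<close>

definition induced_edges :: "('a \<Rightarrow> 'a \<Rightarrow> bool) \<Rightarrow> 'a set \<Rightarrow> 'a \<Rightarrow> 'a \<Rightarrow> bool" where
  "induced_edges E W = (\<lambda>u w. E u w \<and> u \<in> W \<and> w \<in> W)"

lemma simple_graph_induced:
  assumes "simple_graph V E" "W \<subseteq> V"
  shows "simple_graph W (induced_edges E W)"
  using assms finite_subset unfolding simple_graph_def induced_edges_def by blast

lemma planar_subgraph:
  assumes "planar V E" "W \<subseteq> V" "\<And>u w. E' u w \<Longrightarrow> E u w \<and> u \<in> W \<and> w \<in> W"
  shows "planar W E'"
proof -
  obtain p :: "'a \<Rightarrow> complex" and \<gamma> where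
    inj: "inj_on p V"
    and arcs: "\<forall>u v. E u v \<longrightarrow> arc (\<gamma> {u, v}) \<and> {pathstart (\<gamma> {u,v}), pathfinish (\<gamma> {u,v})} = {p u, p v}
         \<and> path_image (\<gamma> {u, v}) \<inter> p ` V = {p u, p v}"
    and crossing: "\<forall>u v x y. E u v \<longrightarrow> E x y \<longrightarrow> {u, v} \<noteq> {x, y} \<longrightarrow>
         path_image (\<gamma> {u, v}) \<inter> path_image (\<gamma> {x, y}) \<subseteq> p ` ({u, v} \<inter> {x, y})"
    using assms(1) unfolding planar_def by (elim exE conjE) (rule that)
  have image_W: "path_image (\<gamma> {u, v}) \<inter> p ` W = {p u, p v}" if "E' u v" for u v
  proof -
    have "path_image (\<gamma> {u, v}) \<inter> p ` V = {p u, p v}" "u \<in> W" "v \<in> W"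
      using arcs assms(3)[OF that] by auto
    then show ?thesis using assms(2) by blast
  qed
  show ?thesis
    unfolding planar_def
  proof (intro exI conjI allI impI)
    show "inj_on p W" using inj assms(2) by (rule inj_on_subset)
    show "path_image (\<gamma> {u, v}) \<inter> p ` W = {p u, p v}" if "E' u v" for u v
      using image_W that .
    show "arc (\<gamma> {u, v})" "{pathstart (\<gamma> {u,v}), pathfinish (\<gamma> {u,v})} = {p u, p v}"
      if "E' u v" for u v
      using arcs assms(3)[OF that] by auto
    show "path_image (\<gamma> {u, v}) \<inter> path_image (\<gamma> {x, y}) \<subseteq> p ` ({u, v} \<inter> {x, y})"
      if "E' u v" "E' x y" "{u, v} \<noteq> {x, y}" for u v x y
      using crossing assms(3) that by blast
  qed
qed

lemma is_cycle_mono: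
  assumes "is_cycle E' k c" "\<And>u w. E' u w \<Longrightarrow> E u w"
  shows "is_cycle E k c"
  using assms by (auto simp: is_cycle_def)

lemma no_adjacent_345_antimono:
  assumes "no_adjacent_345 E" "\<And>u w. E' u w \<Longrightarrow> E u w"
  shows "no_adjacent_345 E'"
  using assms is_cycle_mono unfolding no_adjacent_345_def by metis

lemma is_cycle_induced:
  assumes "is_cycle E k c" "set c \<subseteq> W"
  shows "is_cycle (induced_edges E W) k c"
proof -
  have "c ! j \<in> W" if "j < k" for j
    using assms that by (auto simp: is_cycle_def)
  then show ?thesis using assms(1) by (auto simp: is_cycle_def induced_edges_def)
qed

lemma set_cycle_subset:
  assumes "is_cycle E k c" "simple_graph V E"
  shows "set c \<subseteq> V"
proof
  fix x assume "x \<in> set c"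
  then obtain i where "i < k" "x = c ! i"
    using assms(1) by (auto simp: is_cycle_def in_set_conv_nth)
  then have "E x (c ! ((i + 1) mod k))" using assms(1) by (auto simp: is_cycle_def)
  then show "x \<in> V" using assms(2) by (auto simp: simple_graph_def)
qed

lemma is_cover_restrict:
  assumes "is_cover V E s HE" "W \<subseteq> V"
  shows "is_cover W (induced_edges E W) s (restrict_cover HE W)"
  unfolding is_cover_def
proof (intro conjI)
  show "\<forall>x y. restrict_cover HE W x y \<longrightarrow>
          x \<in> W \<times> {1..s} \<and> y \<in> W \<times> {1..s} \<and> x \<noteq> y \<and> restrict_cover HE W y x"
    using assms(1) by (auto simp: is_cover_def restrict_cover_def mem_Times_iff)
  show "\<forall>u \<in> W. \<forall>c \<in> {1..s}. \<forall>d \<in> {1..s}. c \<noteq> d \<longrightarrow> restrict_cover HE W (u, c) (u, d)"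
    using assms by (auto simp: is_cover_def restrict_cover_def)
  show "\<forall>u v c d d'. u \<noteq> v \<longrightarrow> restrict_cover HE W (u, c) (v, d) \<longrightarrow>
          restrict_cover HE W (u, c) (v, d') \<longrightarrow> d = d'"
    using assms(1) unfolding is_cover_def restrict_cover_def by blast
  show "\<forall>u v c d. u \<noteq> v \<longrightarrow> restrict_cover HE W (u, c) (v, d) \<longrightarrow> induced_edges E W u v"
    using assms(1) unfolding is_cover_def restrict_cover_def induced_edges_def by auto
qed

lemma restrict_cover_restrict:
  "U \<subseteq> W \<Longrightarrow> restrict_cover (restrict_cover HE W) U = restrict_cover HE U"
  by (auto simp: restrict_cover_def)

lemma representative_insert:
  assumes "representative W s R" "v \<notin> W" "c \<in> {1..s}"
  shows "representative (insert v W) s (insert (v, c) R)"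
  using assms unfolding representative_def by blast

text \<open>Coloring v last: the count of earlier H-neighbors of (v,c) does not depend on the
  order in which R was colored.\<close>
lemma dp_F_coloring_insert:
  assumes col: "dp_F_coloring (restrict_cover HE W) s f W R"
    and v: "v \<notin> W" and c: "c \<in> {1..s}" and few: "card {x \<in> R. HE x (v, c)} < f c v"
  shows "dp_F_coloring HE s f (insert v W) (insert (v, c) R)"
proof -
  obtain xs where rep: "representative W s R" and xs: "distinct xs" "set xs = R"
    and order: "\<forall>j < length xs. card {k. k < j \<and> restrict_cover HE W (xs ! k) (xs ! j)}
                                  < f (snd (xs ! j)) (fst (xs ! j))"
    using col unfolding dp_F_coloring_def by blast
  have in_W: "fst (xs ! k) \<in> W" if "k < length xs" for k
    using rep xs(2) nth_mem[OF that] unfolding representative_def by auto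
  define ys where "ys = xs @ [(v, c)]"
  have "(v, c) \<notin> R" using rep v unfolding representative_def by auto
  then have "distinct ys" "set ys = insert (v, c) R" using xs by (auto simp: ys_def)
  moreover have "card {k. k < j \<and> HE (ys ! k) (ys ! j)} < f (snd (ys ! j)) (fst (ys ! j))"
    if "j < length ys" for j
  proof (cases "j = length xs")
    case True
    then have "{k. k < j \<and> HE (ys ! k) (ys ! j)} = {k. k < length xs \<and> HE (xs ! k) (v, c)}"
      by (auto simp: ys_def nth_append)
    then have "card {k. k < j \<and> HE (ys ! k) (ys ! j)} = length (filter (\<lambda>x. HE x (v, c)) xs)"
      by (simp add: length_filter_conv_card)
    also have "\<dots> = card {x \<in> R. HE x (v, c)}"
      using distinct_length_filter[OF xs(1)] xs(2) by (simp add: Collect_conj_eq Int_commute)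
    finally show ?thesis using few True by (simp add: ys_def)
  next
    case False
    then have j: "j < length xs" using that by (simp add: ys_def)
    have "{k. k < j \<and> HE (ys ! k) (ys ! j)} = {k. k < j \<and> restrict_cover HE W (xs ! k) (xs ! j)}"
      using j in_W by (auto simp: ys_def nth_append restrict_cover_def)
    then show ?thesis using order j by (simp add: ys_def nth_append)
  qed
  ultimately show ?thesis
    using representative_insert[OF rep v c] unfolding dp_F_coloring_def by blast
qed

lemma sum_card_colored_cover_neighbors_le_degree:
  assumes cov: "is_cover V E s HE" and sg: "simple_graph V E"
    and rep: "representative W s R" and W: "W \<subseteq> V" "v \<notin> W"
  shows "(\<Sum>c = 1..s. card {x \<in> R. HE x (v, c)}) \<le> degree V E v"
proof -
  define N where "N c = {x \<in> R. HE x (v, c)}" for c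
  have R: "R \<subseteq> W \<times> {1..s}" using rep unfolding representative_def by blast
  have finite_R: "finite R"
    using R W(1) sg finite_subset[of R "V \<times> {1..s}"] unfolding simple_graph_def by blast
  have inj_R: "inj_on fst R"
  proof (rule inj_onI)
    fix x y assume "x \<in> R" "y \<in> R" "fst x = fst y"
    then show "x = y" using rep R unfolding representative_def by (metis mem_Times_iff prod.collapse subsetD)
  qed
  have match: "\<And>u w c d d'. u \<noteq> w \<Longrightarrow> HE (u, c) (w, d) \<Longrightarrow> HE (u, c) (w, d') \<Longrightarrow> d = d'"
    and edge: "\<And>u w c d. u \<noteq> w \<Longrightarrow> HE (u, c) (w, d) \<Longrightarrow> E u w"
    using cov unfolding is_cover_def by blast+
  have not_v: "fst x \<noteq> v" if "x \<in> R" for x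
    using R W(2) that by auto
  have same_color: "c = d" if "x \<in> R" "HE x (v, c)" "HE x (v, d)" for x c d
    using match[of "fst x" v "snd x" c d] not_v[OF that(1)] that(2,3) by simp
  have neighbor: "fst x \<in> V \<and> E v (fst x)" if "x \<in> R" "HE x (v, c)" for x c
    using edge[of "fst x" v "snd x" c] not_v[OF that(1)] that(2) sg unfolding simple_graph_def by auto
  have "N c \<inter> N d = {}" if "c \<noteq> d" for c d
    using same_color that unfolding N_def by blast
  then have "(\<Sum>c = 1..s. card (N c)) = card (\<Union>c \<in> {1..s}. N c)"
    using finite_R by (intro card_UN_disjoint[symmetric]) (auto simp: N_def)
  also have "\<dots> \<le> card {u \<in> V. E v u}"
  proof (rule card_inj_on_le[where f = fst])
    show "inj_on fst (\<Union>c \<in> {1..s}. N c)"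
      using inj_R by (rule inj_on_subset) (auto simp: N_def)
    show "fst ` (\<Union>c \<in> {1..s}. N c) \<subseteq> {u \<in> V. E v u}"
      using neighbor unfolding N_def by blast
    show "finite {u \<in> V. E v u}" using sg unfolding simple_graph_def by simp
  qed
  finally show ?thesis unfolding N_def degree_def .
qed

lemma dp_F_coloring_extend_vertex:
  assumes cov: "is_cover V E s HE" and sg: "simple_graph V E" and v: "v \<in> V"
    and low: "degree V E v < (\<Sum>c = 1..s. f c v)"
    and col: "dp_F_coloring (restrict_cover HE (V - {v})) s f (V - {v}) R"
  shows "\<exists>c. dp_F_coloring HE s f V (insert (v, c) R)"
proof -
  have "representative (V - {v}) s R" using col unfolding dp_F_coloring_def by blast
  then have "(\<Sum>c = 1..s. card {x \<in> R. HE x (v, c)}) \<le> degree V E v"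
    using sum_card_colored_cover_neighbors_le_degree[OF cov sg] by blast
  with low have "(\<Sum>c = 1..s. card {x \<in> R. HE x (v, c)}) < (\<Sum>c = 1..s. f c v)"
    by linarith
  then obtain c where "c \<in> {1..s}" "card {x \<in> R. HE x (v, c)} < f c v"
    using sum_mono[of "{1..s}" "\<lambda>c. f c v" "\<lambda>c. card {x \<in> R. HE x (v, c)}"] by (meson not_less)
  then have "dp_F_coloring HE s f (insert v (V - {v})) (insert (v, c) R)"
    using dp_F_coloring_insert[OF col] by blast
  moreover have "insert v (V - {v}) = V" using v by blast
  ultimately show ?thesis by auto
qed

lemma counterexample_delete_vertex:
  assumes ce: "counterexample V E C0 s HE f R0" and v: "v \<in> V" "v \<notin> set C0"
    and low: "degree V E v < (\<Sum>c = 1..s. f c v)"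
  shows "counterexample (V - {v}) (induced_edges E (V - {v})) C0 s
           (restrict_cover HE (V - {v})) f R0"
proof -
  have sg: "simple_graph V E" and pl: "planar V E" and no_345: "no_adjacent_345 E"
    and cyc: "is_cycle E 3 C0" and cov: "is_cover V E s HE"
    and R0: "dp_F_coloring (restrict_cover HE (set C0)) s f (set C0) R0"
    and no_ext: "\<nexists>R. dp_F_coloring HE s f V R \<and> R0 \<subseteq> R"
    using ce unfolding counterexample_def by blast+
  have C0: "set C0 \<subseteq> V - {v}" using set_cycle_subset[OF cyc sg] v(2) by blast
  show ?thesis
    unfolding counterexample_def
  proof (intro conjI)
    show "simple_graph (V - {v}) (induced_edges E (V - {v}))"
      using sg by (rule simple_graph_induced) blast
    show "planar (V - {v}) (induced_edges E (V - {v}))"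
      using pl by (rule planar_subgraph) (auto simp: induced_edges_def)
    show "no_adjacent_345 (induced_edges E (V - {v}))"
      using no_345 by (rule no_adjacent_345_antimono) (simp add: induced_edges_def)
    show "is_cycle (induced_edges E (V - {v})) 3 C0"
      using cyc C0 by (rule is_cycle_induced)
    show "is_cover (V - {v}) (induced_edges E (V - {v})) s (restrict_cover HE (V - {v}))"
      using cov by (rule is_cover_restrict) blast
    show "dp_F_coloring (restrict_cover (restrict_cover HE (V - {v})) (set C0)) s f (set C0) R0"
      using R0 C0 by (simp add: restrict_cover_restrict)
    show "\<nexists>R. dp_F_coloring (restrict_cover HE (V - {v})) s f (V - {v}) R \<and> R0 \<subseteq> R"
      using dp_F_coloring_extend_vertex[where f = f, OF cov sg v(1) low] no_ext by blast
  qed (use ce in \<open>auto simp: counterexample_def\<close>)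
qed

theorem lemma4:
  fixes V :: "'a set" and E :: "'a \<Rightarrow> 'a \<Rightarrow> bool" and C0 :: "'a list" and s :: nat
    and HE :: "'a \<times> nat \<Rightarrow> 'a \<times> nat \<Rightarrow> bool" and f :: "nat \<Rightarrow> 'a \<Rightarrow> nat"
    and R0 :: "('a \<times> nat) set"
  assumes ce: "counterexample V E C0 s HE f R0"
    and minimal: "\<And>V' E' C0' s' HE' f' R0'. counterexample (V' :: 'a set) E' C0' s' HE' f' R0' \<Longrightarrow> card V \<le> card V'"
  shows "\<forall>v \<in> V - set C0. degree V E v \<ge> 4"
proof (rule ccontr)
  assume "\<not> ?thesis"
  then obtain v where v: "v \<in> V" "v \<notin> set C0" and deg: "degree V E v < 4" by force
  have "4 \<le> (\<Sum>c = 1..s. f c v)" and "finite V"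
    using ce v(1) unfolding counterexample_def simple_graph_def by auto
  then have "counterexample (V - {v}) (induced_edges E (V - {v})) C0 s
               (restrict_cover HE (V - {v})) f R0"
    using counterexample_delete_vertex[OF ce v] deg by simp
  then have "card V \<le> card (V - {v})" by (rule minimal)
  then show False using card_Diff1_less[OF \<open>finite V\<close> v(1)] by linarith
qed

end
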